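(* Let $n,r\ge1$, let $M\in\mathbb{F}[x]^{r\times r}$ and $N\in\mathbb{F}[y]^{r\times r}$ have all entries of degree $<n$, and let $\omega\in\mathbb{F}$ have multiplicative order $\ge n^2$. Then for every $\alpha\in\mathbb{F}$, $$\mathrm{span}\{\mathrm{coeff}_{x^iy^j}(M(x)N(y))\}_{0\le i,j<n}\supseteq\mathrm{span}\{M(\omega^\ell\alpha)N((\omega^\ell\alpha)^n)\}_{0\le\ell<r^2},$$ and for all but fewer than $n^2r^2$ values of $\alpha\in\mathbb{F}$ these two spans are equal.
   Context: For a matrix $P$ with polynomial entries, $\mathrm{coeff}_{x^iy^j}(P)$ is the scalar matrix obtained by taking the coefficient of the monomial $x^iy^j$ in each entry. Spans are $\mathbb{F}$-linear spans in $\mathbb{F}^{r\times r}$. *)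

theory Defs
  imports "HOL-Analysis.Analysis" "HOL-Computational_Algebra.Polynomial"
begin

text \<open>r x r matrices are indexed by a finite type 'r, with r = CARD('r) (so r >= 1 automatically).\<close>

definition mat_scale :: "'a::field \<Rightarrow> 'a^'r^'r \<Rightarrow> 'a^'r^'r" where
  "mat_scale c A = (\<chi> a b. c * A$a$b)"

definition mat_span :: "('a::field^'r^'r) set \<Rightarrow> ('a^'r^'r) set" where
  "mat_span S = module.span mat_scale S"

definition ord_ge :: "'a::field \<Rightarrow> nat \<Rightarrow> bool" where
  "ord_ge w m \<longleftrightarrow> w \<noteq> 0 \<and> (\<forall>k. 0 < k \<and> k < m \<longrightarrow> w ^ k \<noteq> 1)"

text \<open>Bivariate polynomials in F[x,y] are represented as elements of (F[x])[y],
  i.e. type 'a poly poly: outer variable y, inner variable x.\<close>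
definition polyX :: "'a::comm_ring_1 poly \<Rightarrow> 'a poly poly" where
  "polyX p = [:p:]"

definition polyY :: "'a::comm_ring_1 poly \<Rightarrow> 'a poly poly" where
  "polyY p = map_poly (\<lambda>c. [:c:]) p"

definition prodXY :: "'a::comm_ring_1 poly^'r^'r \<Rightarrow> 'a poly^'r^'r \<Rightarrow> 'a poly poly^'r^'r" where
  "prodXY M N = (\<chi> a b. polyX (M$a$b)) ** (\<chi> a b. polyY (N$a$b))"

definition coeff_xy :: "'a::comm_ring_1 poly poly^'r^'r \<Rightarrow> nat \<Rightarrow> nat \<Rightarrow> 'a^'r^'r" where
  "coeff_xy P i j = (\<chi> a b. coeff (coeff (P$a$b) j) i)"

definition eval_mat :: "'a::comm_ring_1 poly^'r^'r \<Rightarrow> 'a \<Rightarrow> 'a^'r^'r" where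
  "eval_mat M z = (\<chi> a b. poly (M$a$b) z)"

end

theory Submission
  imports Defs "Jordan_Normal_Form.Determinant"
begin

text \<open>
  Let \<open>C\<^sub>k\<close> (\<open>k < N\<close>, \<open>N = n\<^sup>2\<close>) be the coefficient matrices of \<open>M(x) N(y)\<close>, indexed so that
  \<open>x\<^sup>i y\<^sup>j\<close> gets \<open>k = i + n j\<close>.  Substituting \<open>x = z\<close>, \<open>y = z\<^sup>n\<close> gives \<open>M(z) N(z\<^sup>n) = P(z) = \<Sum>\<^sub>k z\<^sup>k C\<^sub>k\<close>,
  so every evaluation lies in \<open>V = span {C\<^sub>k}\<close>; this is the first claim.

  For the second claim pick, by Gaussian elimination, pivot indices \<open>s\<^sub>1, \<dots>, s\<^sub>d\<close> such that the
  \<open>C\<^bsub>s\<^sub>i\<^esub>\<close> form a basis of \<open>V\<close> (so \<open>d \<le> r\<^sup>2\<close>) and \<open>P(z) = \<Sum>\<^sub>i q\<^sub>i(z) C\<^bsub>s\<^sub>i\<^esub>\<close>, where the lowest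
  term of \<open>q\<^sub>i\<close> is \<open>z\<^bsup>s\<^sub>i\<^esup>\<close>.  The evaluations at \<open>\<omega>\<^sup>l \<alpha>\<close> (\<open>l < d\<close>) then span \<open>V\<close> as soon as the matrix
  \<open>(q\<^sub>i(\<omega>\<^sup>l \<alpha>))\<^sub>i\<^sub>l\<close> is invertible.  Its determinant is a polynomial \<open>D(\<alpha>)\<close> of degree \<open>\<le> d (N - 1)\<close>;
  factoring \<open>\<alpha>\<^bsup>s\<^sub>i\<^esup>\<close> out of row \<open>i\<close> leaves a matrix whose value at \<open>\<alpha> = 0\<close> is the Vandermonde
  matrix of the distinct points \<open>\<omega>\<^bsup>s\<^sub>i\<^esup>\<close>, so \<open>D \<noteq> 0\<close> and fewer than \<open>N r\<^sup>2\<close> values of \<open>\<alpha>\<close> are bad.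
\<close>

no_notation Matrix.vec_index (infixl "$" 100)

lemma poly_det: "det (map_mat (\<lambda>p. poly p a) A) = poly (det A) a"
proof -
  interpret eval: comm_ring_hom "\<lambda>p. poly p a" by unfold_locales auto
  show ?thesis by (rule eval.hom_det)
qed

lemma degree_det_le:
  fixes A :: "'a::comm_ring_1 poly mat"
  assumes A: "A \<in> carrier_mat d d" and deg: "\<And>i l. i < d \<Longrightarrow> l < d \<Longrightarrow> degree (A $$ (i,l)) \<le> m"
  shows "degree (det A) \<le> d * m"
  unfolding det_def'[OF A]
proof (rule degree_sum_le)
  fix p assume "p \<in> {p. p permutes {0..<d}}"
  then have p: "i < d \<Longrightarrow> p i < d" for i by (auto dest: permutes_in_image)
  have "degree (\<Prod>i = 0..<d. A $$ (i, p i)) \<le> (\<Sum>i = 0..<d. degree (A $$ (i, p i)))"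
    using degree_prod_sum_le[of "{0..<d}" "\<lambda>i. A $$ (i, p i)"] by (simp add: o_def)
  also have "\<dots> \<le> (\<Sum>i = 0..<d. m)" using deg p by (intro sum_mono) auto
  finally show "degree (signof p * (\<Prod>i = 0..<d. A $$ (i, p i))) \<le> d * m"
    by (intro order.trans[OF degree_mult_le]) simp
qed (simp add: finite_permutations)

lemma det_scale_rows:
  fixes A B :: "'a::comm_ring_1 mat"
  assumes A: "A \<in> carrier_mat d d" and B: "B \<in> carrier_mat d d"
    and AB: "\<And>i l. i < d \<Longrightarrow> l < d \<Longrightarrow> A $$ (i,l) = f i * B $$ (i,l)"
  shows "det A = (\<Prod>i = 0..<d. f i) * det B"
proof -
  have "signof p * (\<Prod>i = 0..<d. A $$ (i, p i)) = (\<Prod>i = 0..<d. f i) * (signof p * (\<Prod>i = 0..<d. B $$ (i, p i)))"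
    if "p permutes {0..<d}" for p
  proof -
    have "i < d \<Longrightarrow> p i < d" for i using that by (auto dest: permutes_in_image)
    then have "(\<Prod>i = 0..<d. A $$ (i, p i)) = (\<Prod>i = 0..<d. f i * B $$ (i, p i))"
      using AB by (intro prod.cong) auto
    then show ?thesis by (simp add: prod.distrib ac_simps)
  qed
  then show ?thesis by (simp add: det_def'[OF A] det_def'[OF B] sum_distrib_left)
qed

text \<open>The Vandermonde matrix \<open>(x\<^sub>i\<^sup>l)\<close> of distinct points is nonsingular: a kernel vector would
  give a nonzero polynomial of degree \<open>< d\<close> with \<open>d\<close> roots.\<close>
lemma det_vandermonde_nonzero:
  fixes x :: "nat \<Rightarrow> 'a::field"
  assumes inj: "inj_on x {0..<d}"
  shows "det (mat d d (\<lambda>(i,l). x i ^ l)) \<noteq> 0"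
proof
  let ?V = "mat d d (\<lambda>(i,l). x i ^ l)"
  assume "det ?V = 0"
  then obtain v where v: "v \<in> carrier_vec d" "v \<noteq> 0\<^sub>v d" "?V *\<^sub>v v = 0\<^sub>v d"
    using det_0_iff_vec_prod_zero_field[of ?V d] by auto
  define q where "q = (\<Sum>l = 0..<d. monom (vec_index v l) l)"
  have coeff_q: "coeff q k = (if k < d then vec_index v k else 0)" for k
    by (simp add: q_def coeff_sum coeff_monom)
  obtain l where l: "l < d" "vec_index v l \<noteq> 0"
    using v(1,2) by (metis carrier_vecD eq_vecI index_zero_vec(1,2))
  have q0: "q \<noteq> 0" using l coeff_q[of l] by auto
  have "degree q \<le> d - 1" by (rule degree_le) (auto simp: coeff_q)
  then have deg: "degree q < d" using l by simp
  have "poly q (x i) = vec_index (?V *\<^sub>v v) i" if "i < d" for i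
    using that v(1) by (simp add: scalar_prod_def q_def poly_sum poly_monom mult.commute)
  then have "x ` {0..<d} \<subseteq> {z. poly q z = 0}" using v(3) by auto
  then have "card (x ` {0..<d}) \<le> degree q"
    using card_mono[OF poly_roots_finite[OF q0]] card_poly_roots_bound[OF q0] order.trans by blast
  then show False using card_image[OF inj] deg by simp
qed

lemma dilation_lowest_term:
  fixes q :: "'a::comm_ring_1 poly"
  assumes "coeff q s = 1" and "\<forall>k<s. coeff q k = 0"
  obtains r where "q \<circ>\<^sub>p [:0, a:] = monom 1 s * r" and "poly r 0 = a ^ s"
proof -
  have "monom 1 s dvd q \<circ>\<^sub>p [:0, a:]"
    using assms(2) by (simp add: monom_1_dvd_iff' coeff_pcompose_linear)
  then obtain r where r: "q \<circ>\<^sub>p [:0, a:] = monom 1 s * r" by (rule dvdE)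
  have "poly r 0 = coeff (q \<circ>\<^sub>p [:0, a:]) s"
    by (simp add: r coeff_monom_mult poly_0_coeff_0)
  also have "\<dots> = a ^ s" using assms(1) by (simp add: coeff_pcompose_linear)
  finally show ?thesis using that r by blast
qed

lemma powers_inj_below_order:
  fixes \<omega> :: "'a::field"
  assumes "\<omega> \<noteq> 0" and "\<forall>k. 0 < k \<and> k < N \<longrightarrow> \<omega> ^ k \<noteq> 1"
  shows "inj_on (\<lambda>k. \<omega> ^ k) {..<N}"
proof -
  have "\<omega> ^ i \<noteq> \<omega> ^ j" if "i < j" "j < N" for i j
  proof
    assume "\<omega> ^ i = \<omega> ^ j"
    also have "\<omega> ^ j = \<omega> ^ i * \<omega> ^ (j - i)" using \<open>i < j\<close> by (simp flip: power_add)
    finally have "\<omega> ^ (j - i) = 1" using assms(1) by simp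
    then show False using assms(2) that by auto
  qed
  then show ?thesis by (intro inj_onI) (metis lessThan_iff linorder_neqE_nat)
qed

text \<open>Row \<open>i\<close> is divisible by \<open>x\<^bsup>s\<^sub>i\<^esup>\<close>, and the quotient matrix is Vandermonde at \<open>0\<close>.\<close>
lemma det_of_dilations:
  fixes q :: "nat \<Rightarrow> 'a::field poly" and s :: "nat \<Rightarrow> nat" and \<omega> :: 'a
  assumes \<omega>: "\<omega> \<noteq> 0" "\<forall>k. 0 < k \<and> k < N \<longrightarrow> \<omega> ^ k \<noteq> 1"
    and s: "inj_on s {0..<d}" "\<forall>i<d. s i < N"
    and deg: "\<forall>i<d. degree (q i) < N"
    and lowest: "\<forall>i<d. coeff (q i) (s i) = 1 \<and> (\<forall>k<s i. coeff (q i) k = 0)"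
  obtains D where "D \<noteq> 0" and "degree D \<le> d * (N - 1)"
    and "\<And>\<alpha>. det (mat d d (\<lambda>(i,l). poly (q i) (\<omega> ^ l * \<alpha>))) = poly D \<alpha>"
proof
  define A where "A = mat d d (\<lambda>(i,l). q i \<circ>\<^sub>p [:0, \<omega> ^ l:])"
  have A: "A \<in> carrier_mat d d" by (simp add: A_def)
  show "det (mat d d (\<lambda>(i,l). poly (q i) (\<omega> ^ l * \<alpha>))) = poly (det A) \<alpha>" for \<alpha>
  proof -
    have "mat d d (\<lambda>(i,l). poly (q i) (\<omega> ^ l * \<alpha>)) = map_mat (\<lambda>p. poly p \<alpha>) A"
      by (rule eq_matI) (auto simp: A_def poly_pcompose mult.commute)
    then show ?thesis by (simp add: poly_det)
  qed
  show "degree (det A) \<le> d * (N - 1)"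
  proof (rule degree_det_le[OF A])
    fix i l assume "i < d" "l < d"
    then have "degree (q i \<circ>\<^sub>p [:0, \<omega> ^ l:]) \<le> degree (q i)"
      using degree_pcompose_le[of "q i" "[:0, \<omega> ^ l:]"] \<omega>(1) by simp
    moreover have "degree (q i) < N" using deg \<open>i < d\<close> by simp
    ultimately show "degree (A $$ (i,l)) \<le> N - 1" using \<open>i < d\<close> \<open>l < d\<close> by (simp add: A_def)
  qed
  define R where "R i l = (SOME r. q i \<circ>\<^sub>p [:0, \<omega> ^ l:] = monom 1 (s i) * r \<and> poly r 0 = (\<omega> ^ l) ^ s i)"
    for i l
  have R: "q i \<circ>\<^sub>p [:0, \<omega> ^ l:] = monom 1 (s i) * R i l \<and> poly (R i l) 0 = (\<omega> ^ s i) ^ l"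
    if i: "i < d" for i l
  proof -
    obtain r where r: "q i \<circ>\<^sub>p [:0, \<omega> ^ l:] = monom 1 (s i) * r" "poly r 0 = (\<omega> ^ l) ^ s i"
      by (rule dilation_lowest_term[of "q i" "s i"]) (use lowest i in auto)
    have "(\<omega> ^ l) ^ s i = (\<omega> ^ s i) ^ l" by (metis mult.commute power_mult)
    with r show ?thesis unfolding R_def by (metis (mono_tags, lifting) someI)
  qed
  define B where "B = mat d d (\<lambda>(i,l). R i l)"
  have B: "B \<in> carrier_mat d d" by (simp add: B_def)
  have "det A = (\<Prod>i = 0..<d. monom 1 (s i)) * det B"
    by (rule det_scale_rows[OF A B]) (simp add: A_def B_def R)
  moreover have "det B \<noteq> 0"
  proof -
    have "map_mat (\<lambda>p. poly p 0) B = mat d d (\<lambda>(i,l). (\<omega> ^ s i) ^ l)"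
      by (rule eq_matI) (simp_all add: B_def R)
    then have "poly (det B) 0 = det (mat d d (\<lambda>(i,l). (\<omega> ^ s i) ^ l))"
      by (simp flip: poly_det)
    moreover have "inj_on (\<lambda>k. \<omega> ^ k) (s ` {0..<d})"
      using inj_on_subset[OF powers_inj_below_order[OF \<omega>]] s(2) by (simp add: image_subset_iff)
    then have "inj_on (\<lambda>i. \<omega> ^ s i) {0..<d}"
      using comp_inj_on[OF s(1)] by (simp add: o_def)
    ultimately have "poly (det B) 0 \<noteq> 0" by (simp add: det_vandermonde_nonzero)
    then show ?thesis by auto
  qed
  ultimately show "det A \<noteq> 0" by (simp add: monom_eq_0_iff)
qed

text \<open>Gaussian elimination on a finite family \<open>C\<^sub>0, \<dots>, C\<^bsub>N-1\<^esub>\<close>: an independent subfamily indexed by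
  pivots \<open>S\<close> spans every \<open>C\<^sub>k\<close>, and the coefficient sequence of pivot \<open>s\<close> starts at position \<open>s\<close>
  with a \<open>1\<close> (each vector is added as a pivot exactly when it is new).\<close>
lemma (in vector_space) triangular_spanning_subfamily:
  fixes C :: "nat \<Rightarrow> 'b"
  shows "\<exists>S c. S \<subseteq> {..<N} \<and> inj_on C S \<and> independent (C ` S)
     \<and> (\<forall>k<N. C k = (\<Sum>s\<in>S. scale (c s k) (C s)))
     \<and> (\<forall>s\<in>S. c s s = 1 \<and> (\<forall>k<s. c s k = 0))"
proof (induction N)
  case 0
  show ?case by (rule exI[of _ "{}"]) (auto simp: independent_empty)
next
  case (Suc N)
  then obtain S c where S: "S \<subseteq> {..<N}" and inj: "inj_on C S" and ind: "independent (C ` S)"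
    and rep: "\<forall>k<N. C k = (\<Sum>s\<in>S. scale (c s k) (C s))"
    and nrm: "\<forall>s\<in>S. c s s = 1 \<and> (\<forall>k<s. c s k = 0)" by blast
  have finS: "finite S" using S finite_subset by blast
  show ?case
  proof (cases "C N \<in> span (C ` S)")
    case True
    then obtain u where "C N = (\<Sum>v\<in>C ` S. scale (u v) v)"
      using span_finite[of "C ` S"] finS by auto
    also have "\<dots> = (\<Sum>s\<in>S. scale (u (C s)) (C s))"
      by (subst sum.reindex[OF inj]) simp
    finally have u: "C N = (\<Sum>s\<in>S. scale (u (C s)) (C s))" .
    define c' where "c' s k = (if k = N then u (C s) else c s k)" for s k
    show ?thesis
    proof (intro exI[of _ S] exI[of _ c'] conjI)
      show "\<forall>k<Suc N. C k = (\<Sum>s\<in>S. scale (c' s k) (C s))"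
        using rep u by (auto simp: c'_def less_Suc_eq)
      show "\<forall>s\<in>S. c' s s = 1 \<and> (\<forall>k<s. c' s k = 0)"
        using nrm S by (auto simp: c'_def)
    qed (use S inj ind in auto)
  next
    case False
    define c' where "c' s k = (if s = N then (if k = N then 1 else 0) else if k = N then 0 else c s k)"
      for s k
    have NS: "N \<notin> S" using S by auto
    have new: "C N \<notin> C ` S" using False span_base[of _ "C ` S"] by blast
    show ?thesis
    proof (intro exI[of _ "insert N S"] exI[of _ c'] conjI)
      show "inj_on C (insert N S)" using inj new NS by simp
      show "independent (C ` insert N S)" using ind False new by (simp add: independent_insert)
      show "\<forall>k<Suc N. C k = (\<Sum>s\<in>insert N S. scale (c' s k) (C s))"
      proof (intro allI impI)
        fix k assume k: "k < Suc N"
        have "(\<Sum>s\<in>S. scale (c' s k) (C s)) = (if k = N then 0 else C k)"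
          using rep k NS by (auto simp: c'_def less_Suc_eq intro!: sum.neutral sum.cong)
        then show "C k = (\<Sum>s\<in>insert N S. scale (c' s k) (C s))"
          using finS NS by (auto simp: c'_def)
      qed
      show "\<forall>s\<in>insert N S. c' s s = 1 \<and> (\<forall>k<s. c' s k = 0)"
        using nrm S by (auto simp: c'_def)
    qed (use S in auto)
  qed
qed

lemma (in vector_space) in_span_of_invertible_combinations:
  fixes v :: "nat \<Rightarrow> 'b" and A :: "'a mat"
  assumes A: "A \<in> carrier_mat d d" and det: "det A \<noteq> 0" and j: "j < d"
  shows "v j \<in> span ((\<lambda>l. \<Sum>i = 0..<d. scale (A $$ (i,l)) (v i)) ` {0..<d})"
proof -
  let ?w = "\<lambda>l. \<Sum>i = 0..<d. scale (A $$ (i,l)) (v i)"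
  obtain B where B: "B \<in> carrier_mat d d" and AB: "A * B = 1\<^sub>m d"
    using det_non_zero_imp_unit[OF A det] unfolding Units_def ring_mat_def by auto
  have "(\<Sum>l = 0..<d. scale (B $$ (l,j)) (?w l))
      = (\<Sum>l = 0..<d. \<Sum>i = 0..<d. scale (A $$ (i,l) * B $$ (l,j)) (v i))"
    by (simp add: scale_sum_right mult.commute)
  also have "\<dots> = (\<Sum>i = 0..<d. scale (\<Sum>l = 0..<d. A $$ (i,l) * B $$ (l,j)) (v i))"
    by (subst sum.swap) (simp add: scale_sum_left)
  also have "\<dots> = (\<Sum>i = 0..<d. scale ((A * B) $$ (i,j)) (v i))"
    using A B j by (intro sum.cong refl) (simp add: scalar_prod_def)
  also have "\<dots> = (\<Sum>i = 0..<d. if i = j then v i else 0)"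
    using j by (intro sum.cong refl) (simp add: AB)
  also have "\<dots> = v j"
    using j by simp
  finally have v: "v j = (\<Sum>l = 0..<d. scale (B $$ (l,j)) (?w l))" ..
  have "?w l \<in> span (?w ` {0..<d})" if "l \<in> {0..<d}" for l
    using that by (intro span_base) simp
  then show ?thesis by (subst v) (rule span_sum, rule span_scale)
qed

lemma (in vector_space) pivot_coordinates:
  fixes C :: "nat \<Rightarrow> 'b"
  assumes N: "N \<ge> 1" and dim: "\<And>X. independent X \<Longrightarrow> card X \<le> L"
  obtains d s q where "d \<le> L" and "inj_on s {0..<d}" and "\<forall>i<d. s i < N"
    and "\<forall>i<d. degree (q i) < N"
    and "\<forall>i<d. coeff (q i) (s i) = 1 \<and> (\<forall>k<s i. coeff (q i) k = 0)"
    and "\<forall>k<N. C k \<in> span ((\<lambda>i. C (s i)) ` {0..<d})"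
    and "\<And>z. (\<Sum>k<N. scale (z ^ k) (C k)) = (\<Sum>i = 0..<d. scale (poly (q i) z) (C (s i)))"
proof -
  obtain S c where S: "S \<subseteq> {..<N}" and inj: "inj_on C S" and ind: "independent (C ` S)"
    and rep: "\<forall>k<N. C k = (\<Sum>t\<in>S. scale (c t k) (C t))"
    and nrm: "\<forall>t\<in>S. c t t = 1 \<and> (\<forall>k<t. c t k = 0)"
    using triangular_spanning_subfamily[of N C] by blast
  define d where "d = card S"
  obtain s where "bij_betw s {0..<d} S"
    using ex_bij_betw_nat_finite[of S] finite_subset[OF S] by (auto simp: d_def)
  then have s_inj: "inj_on s {0..<d}" and S_s: "S = s ` {0..<d}"
    by (auto simp: bij_betw_def)
  have s_S: "s i \<in> S" if "i < d" for i
    using S_s that by simp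
  then have s_N: "s i < N" if "i < d" for i
    using S that by blast
  define q where "q i = (\<Sum>k<N. monom (c (s i) k) k)" for i
  have coeff_q: "coeff (q i) k = (if k < N then c (s i) k else 0)" for i k
    by (simp add: q_def coeff_sum coeff_monom)
  show ?thesis
  proof (rule that[of d s q])
    show "d \<le> L" using dim[OF ind] card_image[OF inj] by (simp add: d_def)
    show "inj_on s {0..<d}" "\<forall>i<d. s i < N" using s_inj s_N by blast+
    show "\<forall>i<d. degree (q i) < N"
      using N by (auto intro!: le_less_trans[OF degree_le[of "N - 1"]] simp: coeff_q)
    show "\<forall>i<d. coeff (q i) (s i) = 1 \<and> (\<forall>k<s i. coeff (q i) k = 0)"
      using s_S s_N nrm by (auto simp: coeff_q)
    show "\<forall>k<N. C k \<in> span ((\<lambda>i. C (s i)) ` {0..<d})"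
    proof (intro allI impI)
      fix k assume "k < N"
      have "(\<Sum>t\<in>S. scale (c t k) (C t)) \<in> span (C ` S)"
        by (intro span_sum span_scale span_base) auto
      then show "C k \<in> span ((\<lambda>i. C (s i)) ` {0..<d})"
        using rep \<open>k < N\<close> by (simp add: S_s image_image)
    qed
    fix z
    have "(\<Sum>k<N. scale (z ^ k) (C k)) = (\<Sum>k<N. \<Sum>t\<in>S. scale (z ^ k * c t k) (C t))"
      using rep by (simp add: scale_sum_right)
    also have "\<dots> = (\<Sum>t\<in>S. scale (\<Sum>k<N. c t k * z ^ k) (C t))"
      by (subst sum.swap) (simp add: scale_sum_left mult.commute)
    also have "\<dots> = (\<Sum>i = 0..<d. scale (poly (q i) z) (C (s i)))"
      unfolding S_s by (subst sum.reindex[OF s_inj]) (simp add: q_def poly_sum poly_monom)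
    finally show "(\<Sum>k<N. scale (z ^ k) (C k)) = (\<Sum>i = 0..<d. scale (poly (q i) z) (C (s i)))" .
  qed
qed

lemma (in vector_space) span_of_dilated_evaluations:
  fixes C :: "nat \<Rightarrow> 'b" and \<omega> :: 'a
  assumes N: "N \<ge> 1" and L: "L \<ge> 1"
    and \<omega>: "\<omega> \<noteq> 0" "\<forall>k. 0 < k \<and> k < N \<longrightarrow> \<omega> ^ k \<noteq> 1"
    and dim: "\<And>X. independent X \<Longrightarrow> card X \<le> L"
  defines "P \<equiv> \<lambda>z. \<Sum>k<N. scale (z ^ k) (C k)"
  shows "(\<forall>\<alpha>. span {P (\<omega> ^ l * \<alpha>) | l. l < L} \<subseteq> span (C ` {..<N}))
    \<and> finite {\<alpha>. span {P (\<omega> ^ l * \<alpha>) | l. l < L} \<noteq> span (C ` {..<N})}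
    \<and> card {\<alpha>. span {P (\<omega> ^ l * \<alpha>) | l. l < L} \<noteq> span (C ` {..<N})} < N * L"
proof -
  define V where "V = span (C ` {..<N})"
  define U where "U \<alpha> = span {P (\<omega> ^ l * \<alpha>) | l. l < L}" for \<alpha>
  have UV: "U \<alpha> \<subseteq> V" for \<alpha>
  proof -
    have "P z \<in> V" for z unfolding P_def V_def by (intro span_sum span_scale span_base) auto
    then show ?thesis unfolding U_def by (intro span_minimal) (auto simp: V_def)
  qed
  obtain d s q where "d \<le> L" and s: "inj_on s {0..<d}" "\<forall>i<d. s i < N"
    and q: "\<forall>i<d. degree (q i) < N" "\<forall>i<d. coeff (q i) (s i) = 1 \<and> (\<forall>k<s i. coeff (q i) k = 0)"
    and spanned: "\<forall>k<N. C k \<in> span ((\<lambda>i. C (s i)) ` {0..<d})"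
    and P_q: "\<And>z. P z = (\<Sum>i = 0..<d. scale (poly (q i) z) (C (s i)))"
    using pivot_coordinates[OF N dim, of C] unfolding P_def by blast
  obtain D where D: "D \<noteq> 0" "degree D \<le> d * (N - 1)"
    and det_D: "\<And>\<alpha>. det (mat d d (\<lambda>(i,l). poly (q i) (\<omega> ^ l * \<alpha>))) = poly D \<alpha>"
    by (rule det_of_dilations[OF \<omega> s q]) (rule that)
  have good: "U \<alpha> = V" if "poly D \<alpha> \<noteq> 0" for \<alpha>
  proof -
    let ?A = "mat d d (\<lambda>(i,l). poly (q i) (\<omega> ^ l * \<alpha>))"
    let ?w = "\<lambda>l. \<Sum>i = 0..<d. scale (?A $$ (i,l)) (C (s i))"
    have "span (?w ` {0..<d}) \<subseteq> U \<alpha>"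
      unfolding U_def using \<open>d \<le> L\<close> by (intro span_mono) (auto simp: P_q)
    moreover have "C (s j) \<in> span (?w ` {0..<d})" if "j < d" for j
      using in_span_of_invertible_combinations[of ?A d j] det_D[of \<alpha>] \<open>poly D \<alpha> \<noteq> 0\<close> that
      by simp
    ultimately have "(\<lambda>i. C (s i)) ` {0..<d} \<subseteq> U \<alpha>" by auto
    then have "span ((\<lambda>i. C (s i)) ` {0..<d}) \<subseteq> U \<alpha>"
      unfolding U_def by (simp add: span_minimal)
    then have "V \<subseteq> U \<alpha>"
      using spanned unfolding V_def U_def by (intro span_minimal) auto
    with UV show ?thesis by blast
  qed
  have bad: "{\<alpha>. U \<alpha> \<noteq> V} \<subseteq> {\<alpha>. poly D \<alpha> = 0}" using good by blast
  have "card {\<alpha>. U \<alpha> \<noteq> V} \<le> d * (N - 1)"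
    using card_mono[OF poly_roots_finite[OF D(1)] bad] card_poly_roots_bound[OF D(1)] D(2) by linarith
  also have "\<dots> < N * L"
  proof -
    have "d * (N - 1) \<le> L * (N - 1)" using \<open>d \<le> L\<close> by simp
    also have "\<dots> < L * N" using N L by simp
    finally show ?thesis by (simp add: mult.commute)
  qed
  finally show ?thesis
    using UV finite_subset[OF bad poly_roots_finite[OF D(1)]] unfolding U_def V_def by blast
qed

global_interpretation mat_space: vector_space "mat_scale :: 'a::field \<Rightarrow> 'a^'r^'r \<Rightarrow> _"
  by unfold_locales (simp_all add: mat_scale_def Finite_Cartesian_Product.vec_eq_iff algebra_simps)

definition unit_mat :: "'r \<Rightarrow> 'r \<Rightarrow> 'a::field^'r^'r" where
  "unit_mat a b = (\<chi> i j. if i = a \<and> j = b then 1 else 0)"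

lemma mat_unit_expansion:
  "(A :: 'a::field^'r^'r) = (\<Sum>a\<in>UNIV. \<Sum>b\<in>UNIV. mat_scale (A$a$b) (unit_mat a b))"
proof -
  have row: "(\<Sum>b\<in>UNIV. if i = a \<and> j = b then A$a$b else 0) = (if i = a then A$a$j else 0)"
    for i j a by (cases "i = a") auto
  show ?thesis
    by (simp add: Finite_Cartesian_Product.vec_eq_iff mat_scale_def unit_mat_def if_distrib row
        cong: if_cong)
qed

lemma mat_space_independent_card:
  assumes "mat_space.independent (X :: ('a::field^'r^'r) set)"
  shows "card X \<le> CARD('r)^2"
proof -
  let ?E = "(\<lambda>(a,b). unit_mat a b :: 'a^'r^'r) ` UNIV"
  have "A \<in> mat_space.span ?E" for A :: "'a^'r^'r"
    by (subst mat_unit_expansion)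
       (intro mat_space.span_sum mat_space.span_scale mat_space.span_base; auto)
  then have "card X \<le> card ?E"
    using mat_space.independent_span_bound[OF _ assms, of ?E] by auto
  also have "\<dots> \<le> CARD('r)^2"
    using card_image_le[of UNIV "\<lambda>(a,b). unit_mat a b :: 'a^'r^'r"] by (simp add: power2_eq_square)
  finally show ?thesis .
qed

lemma poly_as_bounded_sum:
  fixes p :: "'a::comm_semiring_1 poly"
  assumes "degree p < n"
  shows "poly p x = (\<Sum>i<n. coeff p i * x ^ i)"
proof -
  have "(\<Sum>i<n. coeff p i * x ^ i) = (\<Sum>i\<le>degree p. coeff p i * x ^ i)"
    by (rule sum.mono_neutral_right) (use assms in \<open>auto simp: coeff_eq_0\<close>)
  then show ?thesis by (simp add: poly_altdef)
qed

lemma base_digits_bij: "bij_betw (\<lambda>k. (k mod n, k div n)) {..<n^2} ({..<n} \<times> {..<(n::nat)})"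
proof (rule bij_betw_byWitness[where f' = "\<lambda>(i,j). i + n * j"])
  show "(\<lambda>k. (k mod n, k div n)) ` {..<n^2} \<subseteq> {..<n} \<times> {..<n}"
    by (auto simp: power2_eq_square less_mult_imp_div_less intro!: mod_less_divisor gr0I)
  have "i + n * j < n^2" if "i < n" "j < n" for i j
  proof -
    have "i + n * j < n * (j + 1)" using that by simp
    also have "\<dots> \<le> n * n" using that by (intro mult_left_mono) auto
    finally show ?thesis by (simp add: power2_eq_square)
  qed
  then show "(\<lambda>(i,j). i + n * j) ` ({..<n} \<times> {..<n}) \<subseteq> {..<n^2}" by auto
qed auto

lemma poly_times_poly_at_power:
  fixes p q :: "'a::comm_ring_1 poly"
  assumes "degree p < n" "degree q < n"
  shows "poly p z * poly q (z ^ n) = (\<Sum>k<n^2. z ^ k * (coeff p (k mod n) * coeff q (k div n)))"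
proof -
  have "(z ^ n) ^ j = z ^ (n * j)" for j by (rule power_mult[symmetric])
  then have "poly p z * poly q (z ^ n) = (\<Sum>i<n. \<Sum>j<n. z ^ (i + n * j) * (coeff p i * coeff q j))"
    by (simp add: poly_as_bounded_sum[OF assms(1)] poly_as_bounded_sum[OF assms(2)]
        sum_product power_add ac_simps)
  also have "\<dots> = (\<Sum>(i,j)\<in>{..<n} \<times> {..<n}. z ^ (i + n * j) * (coeff p i * coeff q j))"
    by (simp add: sum.cartesian_product)
  also have "\<dots> = (\<Sum>k<n^2. z ^ (k mod n + n * (k div n)) * (coeff p (k mod n) * coeff q (k div n)))"
    by (subst sum.reindex_bij_betw[OF base_digits_bij, symmetric]) simp
  also have "\<dots> = (\<Sum>k<n^2. z ^ k * (coeff p (k mod n) * coeff q (k div n)))"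
    by simp
  finally show ?thesis .
qed

lemma coeff_xy_prodXY:
  "coeff_xy (prodXY M N) i j $ a $ b = (\<Sum>c\<in>UNIV. coeff (M$a$c) i * coeff (N$c$b) j)"
  by (simp add: coeff_xy_def prodXY_def matrix_matrix_mult_def polyX_def polyY_def
      coeff_sum coeff_map_poly mult.commute)

lemma eval_product_expansion:
  fixes M N :: "'a::field poly^'r^'r"
  assumes "\<forall>a b. degree (M$a$b) < n" "\<forall>a b. degree (N$a$b) < n"
  shows "eval_mat M z ** eval_mat N (z ^ n)
    = (\<Sum>k<n^2. mat_scale (z ^ k) (coeff_xy (prodXY M N) (k mod n) (k div n)))"
proof -
  have "(\<Sum>c\<in>UNIV. poly (M$a$c) z * poly (N$c$b) (z ^ n))
      = (\<Sum>k<n^2. z ^ k * coeff_xy (prodXY M N) (k mod n) (k div n) $ a $ b)" for a b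
    by (simp add: poly_times_poly_at_power assms coeff_xy_prodXY sum_distrib_left sum.swap[of _ UNIV])
  then show ?thesis
    by (simp add: Finite_Cartesian_Product.vec_eq_iff matrix_matrix_mult_def eval_mat_def mat_scale_def)
qed

lemma coefficient_matrices_reindexed:
  "{coeff_xy P i j | i j. i < n \<and> j < n} = (\<lambda>k. coeff_xy P (k mod n) (k div n)) ` {..<n^2}"
proof -
  have "{coeff_xy P i j | i j. i < n \<and> j < n} = (\<lambda>(i,j). coeff_xy P i j) ` ({..<n} \<times> {..<n})"
    by auto
  also have "\<dots> = (\<lambda>(i,j). coeff_xy P i j) ` (\<lambda>k. (k mod n, k div n)) ` {..<n^2}"
    using bij_betw_imp_surj_on[OF base_digits_bij] by simp
  finally show ?thesis by (simp add: image_image)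
qed

theorem lemma3p5:
  fixes M N :: "'a::field poly^'r^'r" and n :: nat and \<omega> :: 'a
  assumes "n \<ge> 1"
    and "\<forall>a b. degree (M$a$b) < n"
    and "\<forall>a b. degree (N$a$b) < n"
    and "ord_ge \<omega> (n^2)"
  shows "(\<forall>\<alpha>::'a. mat_span {eval_mat M (\<omega>^l * \<alpha>) ** eval_mat N ((\<omega>^l * \<alpha>)^n) | l. l < CARD('r)^2}
            \<subseteq> mat_span {coeff_xy (prodXY M N) i j | i j. i < n \<and> j < n})
       \<and> finite {\<alpha>::'a. mat_span {eval_mat M (\<omega>^l * \<alpha>) ** eval_mat N ((\<omega>^l * \<alpha>)^n) | l. l < CARD('r)^2}
            \<noteq> mat_span {coeff_xy (prodXY M N) i j | i j. i < n \<and> j < n}}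
       \<and> card {\<alpha>::'a. mat_span {eval_mat M (\<omega>^l * \<alpha>) ** eval_mat N ((\<omega>^l * \<alpha>)^n) | l. l < CARD('r)^2}
            \<noteq> mat_span {coeff_xy (prodXY M N) i j | i j. i < n \<and> j < n}} < n^2 * CARD('r)^2"
proof -
  define C where "C k = coeff_xy (prodXY M N) (k mod n) (k div n)" for k
  have \<omega>: "\<omega> \<noteq> 0" "\<forall>k. 0 < k \<and> k < n^2 \<longrightarrow> \<omega> ^ k \<noteq> 1"
    using assms(4) by (auto simp: ord_ge_def)
  have "n^2 \<ge> 1" "CARD('r)^2 \<ge> 1" using assms(1) by simp_all
  note main = mat_space.span_of_dilated_evaluations[OF this \<omega> mat_space_independent_card, of C]
  show ?thesis
    using main unfolding mat_span_def C_def
    by (simp add: eval_product_expansion[OF assms(2,3)] coefficient_matrices_reindexed)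
qed

end
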